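(* Let $\frac12\le M<\frac23$. Algorithm C (defined in the context) has migration factor at most $M$, and on every input whose optimal offline makespan is $1$ it produces a schedule of makespan at most $2-M$. Hence its competitive ratio is at most $2-M$.
   Context: Model (two hierarchical machines with migration, bin stretching). Jobs $1,2,\dots,n$ arrive one by one ($n$ unknown in advance). Job $j$ has a size $p_j>0$ and a grade of service (GoS) $g_j\in\{1,2\}$; a job of GoS $1$ may only be processed on machine $m_1$, a job of GoS $2$ may be processed on $m_1$ or on $m_2$. The load of a machine is the total size of its jobs, the makespan is the maximum load. When job $j$ arrives, the algorithm must assign it, and may migrate previously arrived jobs (respecting GoS) of total size at most $M\cdot p_j$ (migration factor $M$). Bin stretching: the optimal offline makespan of the complete input is known in advance and scaled to $1$. The competitive ratio is the supremum over inputs of (algorithm's makespan)/(optimal makespan). Notation: $Y_{j}$ is the set of jobs on $m_2$ just after job $j$ has been handled, $y_j$ its total size, $y_0=0$; $p^{\max Y}_j$ is the largest size of a job in $Y_{j-1}$ ($0$ if empty); "sorted $Y_{j-1}$" lists $Y_{j-1}$ in non-increasing order of size; $w_j$ is the total size of the chosen set $W$. Algorithm C (parameter $M$). On arrival of job $j$: Step 2: if $g_j=1$ or $y_{j-1}\ge M$, assign $j$ to $m_1$. Step 3: else if $y_{j-1}+p_j\le 2-M$, assign $j$ to $m_2$. Step 4: else if $p^{\max Y}_j>M\cdot p_j$, assign $j$ to $m_1$. Step 5: otherwise let $W$ be the shortest prefix of sorted $Y_{j-1}$ with total size at least $p_j+y_{j-1}-(2-M)$ (or $W=Y_{j-1}$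 if none exists); migrate the jobs of $W$ to $m_1$ and assign $j$ to $m_2$. *)

theory Defs
  imports Complex_Main
begin

text \<open>Jobs are numbered 1..n; job j has size p j and GoS g j (1 or 2).
  A schedule is given by the set S of jobs on m2 (the rest are on m1).\<close>

definition load1 :: "nat \<Rightarrow> (nat \<Rightarrow> real) \<Rightarrow> nat set \<Rightarrow> real" where
  "load1 n p S = (\<Sum>i\<in>{1..n} - S. p i)"

definition load2 :: "(nat \<Rightarrow> real) \<Rightarrow> nat set \<Rightarrow> real" where
  "load2 p S = (\<Sum>i\<in>S. p i)"

definition makespan :: "nat \<Rightarrow> (nat \<Rightarrow> real) \<Rightarrow> nat set \<Rightarrow> real" where
  "makespan n p S = max (load1 n p S) (load2 p S)"

definition feasible :: "nat \<Rightarrow> (nat \<Rightarrow> nat) \<Rightarrow> nat set \<Rightarrow> bool" where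
  "feasible n g S \<longleftrightarrow> S \<subseteq> {1..n} \<and> (\<forall>i\<in>S. g i = 2)"

definition opt_makespan :: "nat \<Rightarrow> (nat \<Rightarrow> real) \<Rightarrow> (nat \<Rightarrow> nat) \<Rightarrow> real" where
  "opt_makespan n p g = Min (makespan n p ` {S. feasible n g S})"

definition pmaxY :: "(nat \<Rightarrow> real) \<Rightarrow> nat set \<Rightarrow> real" where
  "pmaxY p Y = (if Y = {} then 0 else Max (p ` Y))"

definition prefix_len :: "(nat \<Rightarrow> real) \<Rightarrow> nat list \<Rightarrow> real \<Rightarrow> nat" where
  "prefix_len p ys t =
     (if \<exists>k\<le>length ys. sum_list (map p (take k ys)) \<ge> t
      then (LEAST k. k \<le> length ys \<and> sum_list (map p (take k ys)) \<ge> t)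
      else length ys)"

text \<open>One step of Algorithm C for job j: Y is Y_{j-1}, Y' is Y_j, W is the set
  of migrated jobs. Ties in the sorting of Y_{j-1} may be broken arbitrarily.\<close>
definition C_step :: "real \<Rightarrow> (nat \<Rightarrow> real) \<Rightarrow> (nat \<Rightarrow> nat) \<Rightarrow> nat
    \<Rightarrow> nat set \<Rightarrow> nat set \<Rightarrow> nat set \<Rightarrow> bool" where
  "C_step M p g j Y Y' W \<longleftrightarrow>
     (if g j = 1 \<or> load2 p Y \<ge> M then Y' = Y \<and> W = {}
      else if load2 p Y + p j \<le> 2 - M then Y' = insert j Y \<and> W = {}
      else if pmaxY p Y > M * p j then Y' = Y \<and> W = {}
      else (\<exists>ys. distinct ys \<and> set ys = Y \<and> sorted_wrt (\<lambda>a b. p a \<ge> p b) ys \<and>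
              W = set (take (prefix_len p ys (p j + load2 p Y - (2 - M))) ys) \<and>
              Y' = insert j (Y - W)))"

text \<open>A run of Algorithm C on jobs 1..n: Y j is the set on m2 after job j,
  W j the set migrated when job j is handled.\<close>
definition C_run :: "real \<Rightarrow> nat \<Rightarrow> (nat \<Rightarrow> real) \<Rightarrow> (nat \<Rightarrow> nat)
    \<Rightarrow> (nat \<Rightarrow> nat set) \<Rightarrow> (nat \<Rightarrow> nat set) \<Rightarrow> bool" where
  "C_run M n p g Y W \<longleftrightarrow> Y 0 = {} \<and>
     (\<forall>j\<in>{1..n}. C_step M p g j (Y (j - 1)) (Y j) (W j))"

end

theory Submission
  imports Defs
begin

text \<open>
  In Step 5 every job on m2 has size at most M p_j, while the amount to be removed,
  t = p_j + y_{j-1} - (2 - M), satisfies 2t \<le> M p_j; so the shortest sorted prefix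
  reaching t overshoots by less than one job and has size at most M p_j. The load of m2
  never decreases and never exceeds 2 - M.

  For m1: if m2 ends with load at least M, then m1 carries at most 2 - M of a total of at
  most 2. Otherwise the load of m2 stayed below M, so no job ever left m2, and a GoS-2 job r
  ends on m1 only if Step 4 rejected it: then p_r > 2 - 2M and some job b on m2 has
  p_b > M p_r. Any two such jobs together exceed 1 and are therefore separated in every
  optimal schedule; hence at most one job r is rejected, and in the optimum either r or b
  shares m1 with all GoS-1 jobs, which gives load at most 2 - M on m1.
  The hypothesis M \<ge> 1/2 is only needed in the form M \<ge> 0.
\<close>

lemma sum_list_take_prefix_len_bounds:
  fixes p :: "nat \<Rightarrow> real"
  assumes sorted: "sorted_wrt (\<lambda>a b. p a \<ge> p b) ys"
    and bounded: "\<forall>a\<in>set ys. 0 \<le> p a \<and> p a \<le> c"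
    and "0 < t" and "2 * t \<le> c" and "t \<le> sum_list (map p ys)"
  shows "t \<le> sum_list (map p (take (prefix_len p ys t) ys))"
    and "sum_list (map p (take (prefix_len p ys t) ys)) \<le> c"
proof -
  let ?P = "\<lambda>k. k \<le> length ys \<and> t \<le> sum_list (map p (take k ys))"
  have "?P (length ys)" using assms(5) by simp
  then have P: "?P (LEAST k. ?P k)" by (rule LeastI)
  with \<open>?P (length ys)\<close> have len: "prefix_len p ys t = (LEAST k. ?P k)"
    unfolding prefix_len_def by (metis (no_types, lifting))
  then obtain m where m: "(LEAST k. ?P k) = Suc m"
    using P \<open>0 < t\<close> by (cases "LEAST k. ?P k") auto
  then have "\<not> ?P m" by (metis lessI not_less_Least)
  with P m have below: "sum_list (map p (take m ys)) < t" and "m < length ys" by auto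
  then have take_Suc: "take (Suc m) ys = take m ys @ [ys ! m]"
    by (simp add: take_Suc_conv_app_nth)
  \<comment> \<open>The last job of the prefix is no larger than the first, which is part of a sum below t.\<close>
  have "p (ys ! m) \<le> sum_list (map p (take m ys)) \<or> m = 0"
  proof (cases m)
    case (Suc k)
    have "p (ys ! m) \<le> p (ys ! 0)"
      using sorted_wrt_nth_less[OF sorted, of 0 m] Suc \<open>m < length ys\<close> by simp
    also have "\<dots> \<le> sum_list (map p (take m ys))"
    proof (rule member_le_sum_list)
      have "ys ! 0 \<in> set (take m ys)"
        using Suc \<open>m < length ys\<close> nth_mem[of 0 "take m ys"] by simp
      then show "p (ys ! 0) \<in> set (map p (take m ys))" by simp
    qed (use bounded in \<open>auto dest: in_set_takeD\<close>)
    finally show ?thesis ..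
  qed simp
  then have "sum_list (map p (take (Suc m) ys)) \<le> c"
    using take_Suc below bounded \<open>m < length ys\<close> \<open>2 * t \<le> c\<close> by (auto simp: nth_mem)
  then show "sum_list (map p (take (prefix_len p ys t) ys)) \<le> c"
    using len m by simp
  show "t \<le> sum_list (map p (take (prefix_len p ys t) ys))" using len P by simp
qed

lemma load2_insert_diff:
  assumes "finite Y" "j \<notin> Y" "W \<subseteq> Y"
  shows "load2 p (insert j (Y - W)) = load2 p Y + p j - sum p W"
  using assms by (simp add: load2_def sum_diff finite_subset)

lemma C_step_cases:
  fixes p :: "nat \<Rightarrow> real"
  assumes step: "C_step M p g j Y Y' W"
    and "finite Y" and nonneg: "\<forall>i\<in>Y. 0 \<le> p i"
    and "p j \<le> 1" and "g j \<in> {1, 2}" and "M < 2/3"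
  obtains (to_m1) "Y' = Y" "W = {}" "g j = 1 \<or> M \<le> load2 p Y"
  | (to_m2) "Y' = insert j Y" "W = {}" "g j = 2" "load2 p Y + p j \<le> 2 - M"
  | (blocked) b where "Y' = Y" "W = {}" "g j = 2" "load2 p Y < M"
      "2 - M < load2 p Y + p j" "b \<in> Y" "M * p j < p b"
  | (migrate) "Y' = insert j (Y - W)" "W \<subseteq> Y" "g j = 2" "load2 p Y < M"
      "2 - M < load2 p Y + p j" "load2 p Y + p j - (2 - M) \<le> sum p W" "sum p W \<le> M * p j"
proof -
  consider (m1) "g j = 1 \<or> M \<le> load2 p Y"
    | (m2) "g j = 2" "load2 p Y < M" "load2 p Y + p j \<le> 2 - M"
    | (big) "g j = 2" "load2 p Y < M" "2 - M < load2 p Y + p j" "M * p j < pmaxY p Y"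
    | (mig) "g j = 2" "load2 p Y < M" "2 - M < load2 p Y + p j" "pmaxY p Y \<le> M * p j"
    using \<open>g j \<in> {1, 2}\<close> by force
  then show thesis
  proof cases
    case m1
    with step show thesis by (intro to_m1) (auto simp: C_step_def)
  next
    case m2
    with step show thesis by (intro to_m2) (auto simp: C_step_def)
  next
    case big
    then have "Y \<noteq> {}" and "pmaxY p Y \<in> p ` Y"
      using \<open>finite Y\<close> \<open>M < 2/3\<close> \<open>p j \<le> 1\<close> nonneg
      by (auto simp: pmaxY_def load2_def split: if_splits)
    then obtain b where "b \<in> Y" "p b = pmaxY p Y" by (metis imageE)
    with big step show thesis by (intro blocked[of b]) (auto simp: C_step_def)
  next
    case mig
    define t where "t = p j + load2 p Y - (2 - M)"
    obtain ys where ys: "distinct ys" "set ys = Y" "sorted_wrt (\<lambda>a b. p a \<ge> p b) ys"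
      and W: "W = set (take (prefix_len p ys t) ys)" and Y': "Y' = insert j (Y - W)"
      using step mig unfolding C_step_def t_def by auto
    have "p a \<le> pmaxY p Y" if "a \<in> Y" for a
      using that \<open>finite Y\<close> by (auto simp: pmaxY_def)
    then have bounded: "\<forall>a\<in>set ys. 0 \<le> p a \<and> p a \<le> M * p j"
      using ys(2) mig(4) nonneg by force
    have "(2 - M) * p j \<le> 2 - M" using \<open>p j \<le> 1\<close> \<open>M < 2/3\<close> by simp
    then have "2 * t \<le> M * p j" using mig(2) \<open>M < 2/3\<close> by (simp add: t_def algebra_simps)
    moreover have "sum_list (map p ys) = load2 p Y"
      using ys by (simp add: load2_def sum_list_distinct_conv_sum_set)
    moreover have "sum p W = sum_list (map p (take (prefix_len p ys t) ys))"
      using W ys(1) by (simp add: sum_list_distinct_conv_sum_set)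
    moreover have "W \<subseteq> Y" using W ys(2) by (auto dest: in_set_takeD)
    ultimately show thesis
      using sum_list_take_prefix_len_bounds[OF ys(3) bounded, of t] mig Y'
        \<open>p j \<le> 1\<close> \<open>M < 2/3\<close>
      by (intro migrate) (auto simp: t_def)
  qed
qed

lemma opt_makespan_attained:
  obtains S where "feasible n g S" "makespan n p S = opt_makespan n p g"
proof -
  have "finite {S. feasible n g S}"
    by (rule finite_subset[of _ "Pow {1..n}"]) (auto simp: feasible_def)
  moreover have "{} \<in> {S. feasible n g S}" by (simp add: feasible_def)
  ultimately have "opt_makespan n p g \<in> makespan n p ` {S. feasible n g S}"
    unfolding opt_makespan_def by (intro Min_in) auto
  then show thesis using that by auto
qed

lemma sum_le_load1:
  fixes p :: "nat \<Rightarrow> real"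
  assumes "A \<subseteq> {1..n} - S" and "\<forall>i\<in>{1..n}. 0 \<le> p i"
  shows "sum p A \<le> load1 n p S"
  unfolding load1_def using assms by (intro sum_mono2) auto

lemma sum_le_load2:
  fixes p :: "nat \<Rightarrow> real"
  assumes "A \<subseteq> S" and "S \<subseteq> {1..n}" and "\<forall>i\<in>{1..n}. 0 \<le> p i"
  shows "sum p A \<le> load2 p S"
  unfolding load2_def using assms by (intro sum_mono2) (auto intro: finite_subset)

lemma job_le_makespan:
  fixes p :: "nat \<Rightarrow> real"
  assumes "feasible n g S" and "\<forall>i\<in>{1..n}. 0 \<le> p i" and "j \<in> {1..n}"
  shows "p j \<le> makespan n p S"
proof (cases "j \<in> S")
  case True
  then have "sum p {j} \<le> load2 p S"
    using assms by (intro sum_le_load2) (auto simp: feasible_def)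
  then show ?thesis by (simp add: makespan_def)
next
  case False
  then have "sum p {j} \<le> load1 n p S" using assms by (intro sum_le_load1) auto
  then show ?thesis by (simp add: makespan_def)
qed

lemma total_le_twice_makespan:
  assumes "feasible n g S"
  shows "sum p {1..n} \<le> 2 * makespan n p S"
proof -
  have "sum p {1..n} = load1 n p S + load2 p S"
    using assms by (simp add: feasible_def load1_def load2_def sum_diff)
  then show ?thesis by (simp add: makespan_def)
qed

lemma heavy_pair_separated:
  fixes p :: "nat \<Rightarrow> real"
  assumes "feasible n g S" and "makespan n p S \<le> 1" and "\<forall>i\<in>{1..n}. 0 \<le> p i"
    and "x \<in> {1..n}" "y \<in> {1..n}" "x \<noteq> y" and "1 < p x + p y"
  shows "x \<in> S \<longleftrightarrow> y \<notin> S"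
proof -
  have "\<not> sum p {x, y} \<le> 1" using assms(6,7) by simp
  moreover have "sum p {x, y} \<le> load2 p S" if "x \<in> S" "y \<in> S"
    using assms that by (intro sum_le_load2) (auto simp: feasible_def)
  moreover have "sum p {x, y} \<le> load1 n p S" if "x \<notin> S" "y \<notin> S"
    using assms that by (intro sum_le_load1) auto
  ultimately show ?thesis using assms(2) unfolding makespan_def by force
qed

locale C_run_instance =
  fixes M :: real and n :: nat and p :: "nat \<Rightarrow> real" and g :: "nat \<Rightarrow> nat"
    and Y W :: "nat \<Rightarrow> nat set"
  assumes M_nonneg: "0 \<le> M" and M_less: "M < 2/3"
    and jobs: "\<forall>j\<in>{1..n}. 0 < p j \<and> p j \<le> 1 \<and> g j \<in> {1, 2}"
    and run: "C_run M n p g Y W"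
begin

lemma step: "j \<in> {1..n} \<Longrightarrow> C_step M p g j (Y (j - 1)) (Y j) (W j)"
  using run by (simp add: C_run_def)

lemma job_pos: "j \<in> {1..n} \<Longrightarrow> 0 < p j"
  using jobs by auto

lemma jobs_nonneg: "\<forall>i\<in>{1..n}. 0 \<le> p i"
  using job_pos by (simp add: less_imp_le)

lemma Y_feasible: "j \<le> n \<Longrightarrow> feasible j g (Y j)"
proof (induction j)
  case 0
  then show ?case using run by (simp add: C_run_def feasible_def)
next
  case (Suc j)
  then have Yj: "Y j \<subseteq> {1..j}" "\<forall>i\<in>Y j. g i = 2" and j: "Suc j \<in> {1..n}"
    by (auto simp: feasible_def)
  have step_j: "C_step M p g (Suc j) (Y j) (Y (Suc j)) (W (Suc j))" using step[OF j] by simp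
  have "Y j \<subseteq> {1..n}" using Yj(1) j by auto
  then have "finite (Y j)" "\<forall>i\<in>Y j. 0 \<le> p i"
    using jobs finite_subset by (fastforce intro: less_imp_le)+
  moreover have "p (Suc j) \<le> 1" "g (Suc j) \<in> {1, 2}" using jobs j by auto
  ultimately have "Y (Suc j) \<subseteq> insert (Suc j) (Y j) \<and> (Suc j \<in> Y (Suc j) \<longrightarrow> g (Suc j) = 2)"
    by (rule C_step_cases[OF step_j _ _ _ _ M_less]) (use Yj(1) in auto)
  moreover have "insert (Suc j) (Y j) \<subseteq> {1..Suc j}" using Yj(1) by auto
  ultimately show ?case using Yj(2) unfolding feasible_def by blast
qed

lemma step_context:
  assumes "j \<in> {1..n}"
  shows "finite (Y (j - 1))" "\<forall>i\<in>Y (j - 1). 0 \<le> p i" "p j \<le> 1" "g j \<in> {1, 2}"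
    and "j \<notin> Y (j - 1)"
proof -
  have "j - 1 \<le> n" using assms by auto
  then have "Y (j - 1) \<subseteq> {1..j - 1}" using Y_feasible by (simp add: feasible_def)
  moreover have "{1..j - 1} \<subseteq> {1..n}" using assms by auto
  ultimately have "Y (j - 1) \<subseteq> {1..n}" by (rule order_trans)
  then show "finite (Y (j - 1))" "\<forall>i\<in>Y (j - 1). 0 \<le> p i"
    using job_pos finite_subset by (blast, meson less_imp_le subsetD)
  have "j \<notin> {1..j - 1}" by auto
  then show "j \<notin> Y (j - 1)" using \<open>Y (j - 1) \<subseteq> {1..j - 1}\<close> by blast
  show "p j \<le> 1" "g j \<in> {1, 2}" using assms jobs by auto
qed

lemma migration_bound:
  assumes j: "j \<in> {1..n}"
  shows "sum p (W j) \<le> M * p j"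
proof -
  have "0 \<le> M * p j" using M_nonneg job_pos[OF j] by simp
  show ?thesis
    by (rule C_step_cases[OF step[OF j] step_context(1-4)[OF j] M_less])
      (use \<open>0 \<le> M * p j\<close> in simp_all)
qed

lemma load2_step:
  assumes j: "j \<in> {1..n}"
  shows "load2 p (Y (j - 1)) \<le> load2 p (Y j)"
    and "load2 p (Y (j - 1)) \<le> 2 - M \<Longrightarrow> load2 p (Y j) \<le> 2 - M"
proof -
  let ?y = "load2 p (Y (j - 1))"
  have load2_insert: "load2 p (insert j (Y (j - 1) - V)) = ?y + p j - sum p V"
    if "V \<subseteq> Y (j - 1)" for V
    by (rule load2_insert_diff[OF step_context(1,5)[OF j] that])
  consider (same) "Y j = Y (j - 1)"
    | (assigned) "load2 p (Y j) = ?y + p j" "?y + p j \<le> 2 - M"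
    | (migrated) "load2 p (Y j) = ?y + p j - sum p (W j)"
        "?y + p j - (2 - M) \<le> sum p (W j)" "sum p (W j) \<le> M * p j"
  proof (cases rule: C_step_cases[OF step[OF j] step_context(1-4)[OF j] M_less,
        case_names to_m1 to_m2 blocked migrate])
    case to_m2
    with load2_insert[of "{}"] show thesis by (intro assigned) simp_all
  next
    case migrate
    with load2_insert[of "W j"] show thesis by (intro migrated) simp_all
  qed (use same in blast)+
  note load2_cases = this
  have "M * p j \<le> p j" using job_pos[OF j] M_less by simp
  from load2_cases show "?y \<le> load2 p (Y j)"
  proof cases
    case migrated
    then show ?thesis using \<open>M * p j \<le> p j\<close> by linarith
  qed (use job_pos[OF j] in simp_all)
  from load2_cases show "load2 p (Y j) \<le> 2 - M" if "?y \<le> 2 - M"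
    by cases (use that in simp_all)
qed

lemma load2_le: "j \<le> n \<Longrightarrow> load2 p (Y j) \<le> 2 - M"
proof (induction j)
  case 0
  then show ?case using run M_less by (simp add: C_run_def load2_def)
next
  case (Suc j)
  then show ?case using load2_step(2)[of "Suc j"] by simp
qed

lemma load2_mono: "j \<le> k \<Longrightarrow> k \<le> n \<Longrightarrow> load2 p (Y j) \<le> load2 p (Y k)"
proof (induction k rule: dec_induct)
  case (step k)
  then show ?case using load2_step(1)[of "Suc k"] by simp
qed simp

definition rejected_jobs :: "nat set" where
  "rejected_jobs = {i \<in> {1..n}. g i = 2 \<and> i \<notin> Y n}"

lemma rejection_threshold: "1 < (1 + M) * (2 - 2 * M)"
proof -
  have "M * M \<le> 2/3 * M" using M_less M_nonneg by (intro mult_right_mono) auto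
  then show ?thesis using M_less by (simp add: algebra_simps)
qed

lemma load1_split: "load1 n p (Y n) = sum p {i \<in> {1..n}. g i = 1} + sum p rejected_jobs"
proof -
  have "\<forall>i\<in>Y n. g i = 2" using Y_feasible[of n] by (simp add: feasible_def)
  then have "{1..n} - Y n = {i \<in> {1..n}. g i = 1} \<union> rejected_jobs"
    "{i \<in> {1..n}. g i = 1} \<inter> rejected_jobs = {}"
    using jobs by (auto simp: rejected_jobs_def)
  then show ?thesis unfolding load1_def by (simp add: rejected_jobs_def sum.union_disjoint)
qed

lemma low_load_step:
  assumes j: "j \<in> {1..n}" and low: "load2 p (Y j) < M"
  shows "Y (j - 1) \<subseteq> Y j"
    and "j \<notin> Y j \<Longrightarrow> g j = 2 \<Longrightarrow>
      2 - M < load2 p (Y (j - 1)) + p j \<and> (\<exists>b\<in>Y (j - 1). M * p j < p b)"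
proof -
  have "M * p j \<le> M" using step_context(3)[OF j] M_nonneg by (simp add: mult_left_le)
  have "Y (j - 1) \<subseteq> Y j \<and> (j \<notin> Y j \<longrightarrow> g j = 2 \<longrightarrow>
      2 - M < load2 p (Y (j - 1)) + p j \<and> (\<exists>b\<in>Y (j - 1). M * p j < p b))"
  proof (cases rule: C_step_cases[OF step[OF j] step_context(1-4)[OF j] M_less,
        case_names to_m1 to_m2 blocked migrate])
    case migrate
    \<comment> \<open>A migration leaves at least 2 - 2M > M on m2.\<close>
    then have "load2 p (Y j) = load2 p (Y (j - 1)) + p j - sum p (W j)"
      using load2_insert_diff[OF step_context(1,5)[OF j]] by simp
    then show ?thesis using migrate low \<open>M * p j \<le> M\<close> M_less by linarith
  qed (use low in auto)
  then show "Y (j - 1) \<subseteq> Y j"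
    and "j \<notin> Y j \<Longrightarrow> g j = 2 \<Longrightarrow>
      2 - M < load2 p (Y (j - 1)) + p j \<and> (\<exists>b\<in>Y (j - 1). M * p j < p b)"
    by auto
qed

context
  assumes low: "load2 p (Y n) < M"
begin

lemma Y_mono: "j \<le> k \<Longrightarrow> k \<le> n \<Longrightarrow> Y j \<subseteq> Y k"
proof (induction k rule: dec_induct)
  case (step k)
  then have "Suc k \<in> {1..n}" "load2 p (Y (Suc k)) < M"
    using load2_mono[of "Suc k" n] low by auto
  then show ?case using low_load_step(1) step by fastforce
qed simp

lemma rejected_job:
  assumes "r \<in> rejected_jobs"
  shows "2 - 2 * M < p r" and "\<exists>b\<in>Y n. M * p r < p b"
proof -
  have r: "r \<in> {1..n}" "g r = 2" "r \<notin> Y n" using assms by (auto simp: rejected_jobs_def)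
  then have "r - 1 \<le> n" "r \<le> n" by auto
  then have "load2 p (Y (r - 1)) < M" "load2 p (Y r) < M" "Y (r - 1) \<subseteq> Y n" "r \<notin> Y r"
    using load2_mono[of _ n] Y_mono[of _ n] low \<open>r \<notin> Y n\<close> by fastforce+
  with low_load_step(2)[OF r(1)] \<open>g r = 2\<close>
  show "2 - 2 * M < p r" and "\<exists>b\<in>Y n. M * p r < p b" by auto
qed

lemma rejected_jobs_heavy:
  assumes "r \<in> rejected_jobs" and "b \<in> Y n" and "M * p r < p b" and "x \<in> rejected_jobs"
  shows "1 < p x + p b" and "y \<in> rejected_jobs \<Longrightarrow> 1 < p x + p y"
proof -
  have "M * (2 - 2 * M) \<le> M * p r"
    using rejected_job(1)[OF assms(1)] M_nonneg by (intro mult_left_mono) auto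
  then have "(1 + M) * (2 - 2 * M) < p x + p b"
    using rejected_job(1)[OF assms(4)] assms(3) by (simp add: algebra_simps)
  then show "1 < p x + p b" using rejection_threshold by linarith
  show "1 < p x + p y" if "y \<in> rejected_jobs"
    using rejected_job(1)[OF assms(4)] rejected_job(1)[OF that] M_less by linarith
qed

context
  fixes S
  assumes opt: "feasible n g S" "makespan n p S \<le> 1"
begin

lemma rejected_jobs_subsingleton:
  assumes "r \<in> rejected_jobs" and "r' \<in> rejected_jobs"
  shows "r = r'"
proof (rule ccontr)
  assume "r \<noteq> r'"
  obtain b where b: "b \<in> Y n" "M * p r < p b" using rejected_job(2)[OF assms(1)] by blast
  have "b \<in> {1..n}" using b(1) Y_feasible[of n] by (auto simp: feasible_def)
  moreover have "r \<in> {1..n}" "r' \<in> {1..n}" "b \<noteq> r" "b \<noteq> r'"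
    using assms b(1) by (auto simp: rejected_jobs_def)
  \<comment> \<open>r, r' and b would lie pairwise on different machines of the optimum.\<close>
  ultimately show False
    using heavy_pair_separated[OF opt jobs_nonneg, of r r'] heavy_pair_separated[OF opt jobs_nonneg, of r b]
      heavy_pair_separated[OF opt jobs_nonneg, of r' b] \<open>r \<noteq> r'\<close>
      rejected_jobs_heavy[OF assms(1) b assms(1)] rejected_jobs_heavy[OF assms(1) b assms(2)]
      rejected_jobs_heavy(2)[OF assms(1) b assms(1,2)]
    by auto
qed

lemma load1_le_low: "load1 n p (Y n) \<le> 2 - M"
proof -
  define G where "G = {i \<in> {1..n}. g i = 1}"
  have G_m1: "G \<subseteq> {1..n} - S" using opt(1) by (auto simp: G_def feasible_def)
  have "load1 n p S \<le> 1" using opt(2) by (simp add: makespan_def)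
  show ?thesis
  proof (cases "rejected_jobs = {}")
    case True
    then show ?thesis
      using load1_split sum_le_load1[OF G_m1 jobs_nonneg] \<open>load1 n p S \<le> 1\<close> M_less
      by (simp add: G_def)
  next
    case False
    then obtain r where r: "r \<in> rejected_jobs" by auto
    then have "rejected_jobs = {r}" using rejected_jobs_subsingleton by blast
    then have load1_r: "load1 n p (Y n) = sum p G + p r" using load1_split by (simp add: G_def)
    have "r \<in> {1..n}" "r \<notin> G" using r by (auto simp: rejected_jobs_def G_def)
    show ?thesis
    proof (cases "r \<in> S")
      case False
      then have "sum p (insert r G) \<le> load1 n p S"
        using G_m1 \<open>r \<in> {1..n}\<close> by (intro sum_le_load1[OF _ jobs_nonneg]) auto
      then show ?thesis using load1_r \<open>r \<notin> G\<close> \<open>load1 n p S \<le> 1\<close> M_less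
        by (simp add: G_def)
    next
      case True
      \<comment> \<open>Then the job b blocking r is on m1 in the optimum, together with all of G.\<close>
      obtain b where b: "b \<in> Y n" "M * p r < p b" using rejected_job(2)[OF r] by blast
      have "b \<in> {1..n}" "b \<notin> G" "b \<noteq> r"
        using b(1) r Y_feasible[of n] by (auto simp: feasible_def G_def rejected_jobs_def)
      then have "b \<notin> S"
        using True heavy_pair_separated[OF opt jobs_nonneg \<open>r \<in> {1..n}\<close>]
          rejected_jobs_heavy(1)[OF r b r] by auto
      then have "sum p (insert b G) \<le> load1 n p S"
        using G_m1 \<open>b \<in> {1..n}\<close> by (intro sum_le_load1[OF _ jobs_nonneg]) auto
      then have "sum p G + p b \<le> 1" using \<open>b \<notin> G\<close> \<open>load1 n p S \<le> 1\<close> by (simp add: G_def)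
      moreover have "(1 - M) * p r \<le> 1 - M" using step_context(3)[OF \<open>r \<in> {1..n}\<close>] M_less by simp
      ultimately show ?thesis using load1_r b(2) by (simp add: algebra_simps)
    qed
  qed
qed

end

end

lemma load1_le:
  assumes "feasible n g S" and "makespan n p S \<le> 1"
  shows "load1 n p (Y n) \<le> 2 - M"
proof (cases "M \<le> load2 p (Y n)")
  case True
  have "load1 n p (Y n) = sum p {1..n} - load2 p (Y n)"
    using Y_feasible[of n] by (simp add: feasible_def load1_def load2_def sum_diff)
  then show ?thesis using total_le_twice_makespan[OF assms(1), of p] assms(2) True by linarith
next
  case False
  then show ?thesis using load1_le_low[OF _ assms] by simp
qed

lemma makespan_le:
  assumes "feasible n g S" and "makespan n p S \<le> 1"
  shows "makespan n p (Y n) \<le> 2 - M"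
  using load1_le[OF assms] load2_le[of n] by (simp add: makespan_def)

end

theorem mainTheorem10:
  fixes M :: real and n :: nat and p :: "nat \<Rightarrow> real" and g :: "nat \<Rightarrow> nat"
    and Y W :: "nat \<Rightarrow> nat set"
  assumes "1/2 \<le> M" and "M < 2/3"
    and "\<forall>j\<in>{1..n}. p j > 0 \<and> g j \<in> {1, 2}"
    and "opt_makespan n p g = 1"
    and "C_run M n p g Y W"
  shows "(\<forall>j\<in>{1..n}. (\<Sum>i\<in>W j. p i) \<le> M * p j) \<and> makespan n p (Y n) \<le> 2 - M"
proof -
  obtain S where S: "feasible n g S" "makespan n p S = 1"
    using opt_makespan_attained assms(4) by metis
  have "\<forall>i\<in>{1..n}. 0 \<le> p i" using assms(3) by (simp add: less_imp_le)
  then have "\<forall>j\<in>{1..n}. p j \<le> 1" using job_le_makespan[OF S(1)] S(2) by metis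
  with assms interpret C_run_instance M n p g Y W
    by unfold_locales auto
  show ?thesis using migration_bound makespan_le[OF S(1)] S(2) by simp
qed

end
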